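(* Let $G$ be a $4$-graph. Then $G$ is $\mathscr C_2^{(4)}$-hom-free if and only if there is a function $c$ assigning to every $3$-element subset $T$ of $V(G)$ either the label "blue" or one of the three vertices of $T$, such that for every edge $e\in E(G)$ there is a vertex $v\in e$ for which $c(T)=v$ for each of the three $3$-subsets $T\subset e$ containing $v$, and $c(e\setminus\{v\})=$ "blue".
   Context: A $4$-graph is a $4$-uniform hypergraph. For $\ell>4$, the tight cycle $C_\ell^{(4)}$ has vertices $v_1,\dots,v_\ell$ and edges $\{v_i,v_{i+1},v_{i+2},v_{i+3}\}$ for $1\le i\le\ell$ (indices modulo $\ell$). A homomorphism $F\to G$ of $r$-graphs is a map $\phi:V(F)\to V(G)$ such that for every edge $\{x_1,\dots,x_r\}$ of $F$, the image $\{\phi(x_1),\dots,\phi(x_r)\}$ is an edge of $G$ (in particular these $r$ images are distinct). $G$ is $F$-hom-free if there is no homomorphism $F\to G$, and it is hom-free with respect to a family if it is $F$-hom-free for every member $F$. $\mathscr C_k^{(r)}$ denotes the family of all tight cycles $C_\ell^{(r)}$ with $\ell>r$ and $\ell\equiv k\pmod r$. *)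

theory Defs
  imports Main
begin

definition r_graph :: "nat \<Rightarrow> 'a set \<times> 'a set set \<Rightarrow> bool" where
  "r_graph r G \<longleftrightarrow> finite (fst G) \<and> (\<forall>e\<in>snd G. e \<subseteq> fst G \<and> card e = r)"

definition is_hom :: "'b set \<times> 'b set set \<Rightarrow> 'a set \<times> 'a set set \<Rightarrow> ('b \<Rightarrow> 'a) \<Rightarrow> bool" where
  "is_hom F G \<phi> \<longleftrightarrow> (\<forall>x\<in>fst F. \<phi> x \<in> fst G) \<and>
     (\<forall>f\<in>snd F. \<phi> ` f \<in> snd G \<and> card (\<phi> ` f) = card f)"

definition hom_free :: "'a set \<times> 'a set set \<Rightarrow> 'b set \<times> 'b set set \<Rightarrow> bool" where
  "hom_free G F \<longleftrightarrow> \<not> (\<exists>\<phi>. is_hom F G \<phi>)"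

definition tight_cycle :: "nat \<Rightarrow> nat \<Rightarrow> nat set \<times> nat set set" where
  "tight_cycle r l = ({..<l}, {{(i + j) mod l | j. j < r} | i. i < l})"

definition tight_cycle_family :: "nat \<Rightarrow> nat \<Rightarrow> (nat set \<times> nat set set) set" where
  "tight_cycle_family r k = {tight_cycle r l | l. l > r \<and> l mod r = k mod r}"

definition family_hom_free :: "'a set \<times> 'a set set \<Rightarrow> ('b set \<times> 'b set set) set \<Rightarrow> bool" where
  "family_hom_free G \<F> \<longleftrightarrow> (\<forall>F\<in>\<F>. hom_free G F)"

end

theory Submission
  imports Defs
begin

(*
  A homomorphic image of C_l is the same as a closed tight walk of length l, i.e. an l-periodic
  sequence z with every window {z i, ..., z (i + 3)} an edge.

  If c is such a colouring, label each triple of consecutive vertices of a tight walk by 0 if it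
  is blue and by 3, 2, 1 if c points to its first, second, third vertex. Inside an edge pointing
  to v, the vertex v moves one place to the left when the window advances, so the label grows by
  one modulo 4 at every step, and every closed tight walk has length divisible by 4.

  Conversely, let adjacent edges (sharing three vertices) be related by the bijection fixing the
  common triple; composing along paths of adjacent edges gives a monodromy group acting on each
  edge. A path of edges lifts to a tight walk in which every vertex keeps its position modulo 4.
  Hence a fixed-point-free monodromy permutation, which permutes the four positions as a
  rotation, produces a closed tight walk of length not divisible by 4, and doubling it if
  necessary one of length 2 mod 4. So in a hom-free graph every monodromy permutation fixes a
  vertex, and on four points this forces a common fixed point of the whole monodromy group.
  Transporting it along paths picks a vertex v(e) in every edge, consistently for adjacent edges,
  and c(T) = v(e) for T in e containing v(e), blue otherwise, is the required colouring.
*)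

definition window :: "(nat \<Rightarrow> 'a) \<Rightarrow> nat \<Rightarrow> 'a set" where
  "window z i = {z i, z (i + 1), z (i + 2), z (i + 3)}"

definition tight_walk :: "'a set set \<Rightarrow> (nat \<Rightarrow> 'a) \<Rightarrow> nat \<Rightarrow> bool" where
  "tight_walk E z n \<longleftrightarrow> (\<forall>i\<le>n. window z i \<in> E)"

definition closed_tight_walk :: "'a set set \<Rightarrow> (nat \<Rightarrow> 'a) \<Rightarrow> nat \<Rightarrow> bool" where
  "closed_tight_walk E z L \<longleftrightarrow> (\<forall>i. z (i + L) = z i) \<and> (\<forall>i. window z i \<in> E)"

lemma window_eq_image: "window z i = (\<lambda>j. z (i + j)) ` {..<4}"
proof -
  have "{..<4::nat} = {0, 1, 2, 3}" by auto
  then show ?thesis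
    unfolding window_def by simp
qed

lemma window_memE:
  assumes "a \<in> window z i"
  obtains k where "k < 4" "z (i + k) = a"
proof -
  have "a = z (i + 0) \<or> a = z (i + 1) \<or> a = z (i + 2) \<or> a = z (i + 3)"
    using assms unfolding window_def by simp
  then show thesis
    using that[of 0] that[of 1] that[of 2] that[of 3] by fastforce
qed

lemma distinct_window:
  assumes "card (window z i) = 4"
  shows "distinct [z i, z (i + 1), z (i + 2), z (i + 3)]"
  using assms by (intro card_distinct) (simp add: window_def)

lemma periodic_add_mult:
  fixes z :: "nat \<Rightarrow> 'a"
  assumes "\<forall>i. z (i + L) = z i"
  shows "z (i + q * L) = z i"
proof (induction q)
  case (Suc q)
  have "i + Suc q * L = (i + q * L) + L" by simp
  then show ?case using Suc assms by metis
qed simp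

lemma periodic_mod:
  fixes z :: "nat \<Rightarrow> 'a"
  assumes "\<forall>i. z (i + L) = z i"
  shows "z (i mod L) = z i"
  using periodic_add_mult[OF assms, of "i mod L" "i div L"] by simp

lemma window_mod:
  fixes z :: "nat \<Rightarrow> 'a"
  assumes "\<forall>i. z (i + L) = z i"
  shows "window z i = z ` ((\<lambda>j. (i + j) mod L) ` {..<4})"
  unfolding window_eq_image image_image periodic_mod[OF assms] ..

lemma tight_cycle_edge_eq:
  "{(i + j) mod L | j. j < (4::nat)} = (\<lambda>j. (i + j) mod L) ` {..<4}"
  by auto

lemma closed_tight_walk_imp_hom:
  assumes G: "r_graph 4 G" and walk: "closed_tight_walk (snd G) z L"
  shows "is_hom (tight_cycle 4 L) G z"
proof -
  have edge: "e \<subseteq> fst G \<and> card e = 4" if "e \<in> snd G" for e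
    using G that unfolding r_graph_def by blast
  have window: "window z i \<in> snd G" for i
    using walk unfolding closed_tight_walk_def by blast
  have "z x \<in> fst G" for x
    using edge[OF window[of x]] unfolding window_def by blast
  moreover have "z ` f \<in> snd G \<and> card (z ` f) = card f" if "f \<in> snd (tight_cycle 4 L)" for f
  proof -
    obtain i where f_eq: "f = (\<lambda>j. (i + j) mod L) ` {..<4}"
      using \<open>f \<in> snd (tight_cycle 4 L)\<close> unfolding tight_cycle_def tight_cycle_edge_eq by auto
    then have zf: "z ` f = window z i"
      using walk window_mod unfolding closed_tight_walk_def by metis
    have "card (z ` f) \<le> card f" "card f \<le> 4"
      using f_eq card_image_le[of "{..<4::nat}"] by (simp_all add: card_image_le)
    then show ?thesis
      using zf window edge by (metis le_antisym)
  qed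
  ultimately show ?thesis
    unfolding is_hom_def by blast
qed

lemma hom_imp_closed_tight_walk:
  assumes hom: "is_hom (tight_cycle 4 L) G \<phi>" and "0 < L"
  shows "closed_tight_walk (snd G) (\<lambda>i. \<phi> (i mod L)) L"
  unfolding closed_tight_walk_def
proof (intro conjI allI)
  fix i
  have "window (\<lambda>i. \<phi> (i mod L)) i = \<phi> ` ((\<lambda>j. (i mod L + j) mod L) ` {..<4})"
    by (simp add: window_eq_image image_image mod_add_left_eq)
  moreover have "(\<lambda>j. (i mod L + j) mod L) ` {..<4} \<in> snd (tight_cycle 4 L)"
    using \<open>0 < L\<close> unfolding tight_cycle_def tight_cycle_edge_eq by auto
  ultimately show "window (\<lambda>i. \<phi> (i mod L)) i \<in> snd G"
    using hom unfolding is_hom_def by simp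
qed simp

lemma family_hom_free_C2_iff:
  assumes "r_graph 4 G"
  shows "family_hom_free G (tight_cycle_family 4 2) \<longleftrightarrow>
    (\<forall>z L. 4 < L \<and> L mod 4 = 2 \<longrightarrow> \<not> closed_tight_walk (snd G) z L)"
proof -
  have "family_hom_free G (tight_cycle_family 4 2) \<longleftrightarrow>
      (\<forall>L. 4 < L \<and> L mod 4 = 2 \<longrightarrow> \<not> (\<exists>\<phi>. is_hom (tight_cycle 4 L) G \<phi>))"
    unfolding family_hom_free_def hom_free_def tight_cycle_family_def
    by (simp only: mod_less[of "2::nat" 4]) blast
  moreover have "(\<exists>\<phi>. is_hom (tight_cycle 4 L) G \<phi>) \<longleftrightarrow> (\<exists>z. closed_tight_walk (snd G) z L)"
    if "4 < L" for L
    using closed_tight_walk_imp_hom[OF assms] hom_imp_closed_tight_walk that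
    by (metis gr_implies_not0 neq0_conv)
  ultimately show ?thesis
    by blast
qed

lemma closed_tight_walk_double:
  "closed_tight_walk E z L \<Longrightarrow> closed_tight_walk E z (2 * L)"
  unfolding closed_tight_walk_def by (metis add.assoc mult_2)

definition points_to :: "('a set \<Rightarrow> 'a option) \<Rightarrow> 'a set \<Rightarrow> 'a \<Rightarrow> bool" where
  "points_to c e v \<longleftrightarrow> (\<forall>T. T \<subseteq> e \<and> card T = 3 \<and> v \<in> T \<longrightarrow> c T = Some v) \<and> c (e - {v}) = None"

definition triple_label :: "('a set \<Rightarrow> 'a option) \<Rightarrow> 'a \<Rightarrow> 'a \<Rightarrow> 'a \<Rightarrow> nat" where
  "triple_label c p q r =
    (case c {p, q, r} of None \<Rightarrow> 0 | Some v \<Rightarrow> if v = p then 3 else if v = q then 2 else 1)"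

lemma triple_label_step:
  assumes "distinct [p, q, r, s]" and "v \<in> {p, q, r, s}" and "points_to c {p, q, r, s} v"
  shows "triple_label c q r s = Suc (triple_label c p q r) mod 4"
proof -
  have in_triple: "c T = Some v" if "T \<subseteq> {p, q, r, s}" "card T = 3" "v \<in> T" for T
    using assms(3) that unfolding points_to_def by blast
  have "card {p, q, r} = 3" "card {q, r, s} = 3"
    and opposite: "{p, q, r, s} - {p} = {q, r, s}" "{p, q, r, s} - {s} = {p, q, r}"
    using assms(1) by auto
  then have first: "v \<noteq> s \<Longrightarrow> c {p, q, r} = Some v" and second: "v \<noteq> p \<Longrightarrow> c {q, r, s} = Some v"
    using assms(2) in_triple by auto
  have "v = p \<Longrightarrow> c {q, r, s} = None" "v = s \<Longrightarrow> c {p, q, r} = None"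
    using assms(3) opposite unfolding points_to_def by auto
  with first second assms(1,2) show ?thesis
    unfolding triple_label_def by auto
qed

lemma triple_label_less_4: "triple_label c p q r < 4"
  unfolding triple_label_def by (simp split: option.split)

lemma coloured_closed_tight_walk_length:
  assumes coloured: "\<forall>e\<in>E. card e = 4 \<and> (\<exists>v\<in>e. points_to c e v)"
    and walk: "closed_tight_walk E z L"
  shows "L mod 4 = 0"
proof -
  define label where "label i = triple_label c (z i) (z (i + 1)) (z (i + 2))" for i
  have step: "label (Suc i) = Suc (label i) mod 4" for i
  proof -
    have "window z i \<in> E"
      using walk unfolding closed_tight_walk_def by blast
    then obtain v where v: "v \<in> window z i" "points_to c (window z i) v"
      and "card (window z i) = 4"
      using coloured by blast
    then have "distinct [z i, z (i + 1), z (i + 2), z (i + 3)]"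
      by (rule_tac distinct_window)
    from triple_label_step[OF this v[unfolded window_def]]
    show ?thesis
      unfolding label_def by (simp add: numeral_3_eq_3)
  qed
  have label_mod: "label i = (label 0 + i) mod 4" for i
  proof (induction i)
    case 0
    show ?case by (simp add: label_def triple_label_less_4)
  next
    case (Suc i)
    then show ?case using step by (simp add: mod_Suc_eq)
  qed
  have "z (L + j) = z j" for j
    using walk unfolding closed_tight_walk_def by (metis add.commute)
  from this[of 0] this[of 1] this[of 2] have "label L = label 0"
    unfolding label_def by (simp only: add_0_left add_0_right)
  then have "(label 0 + L) mod 4 = label 0"
    using label_mod[of L] by simp
  moreover have "label 0 < 4"
    by (simp add: label_def triple_label_less_4)
  ultimately show ?thesis
    by presburger
qed

definition C2_colouring :: "'a set \<times> 'a set set \<Rightarrow> ('a set \<Rightarrow> 'a option) \<Rightarrow> bool" where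
  "C2_colouring G c \<longleftrightarrow>
    (\<forall>T. T \<subseteq> fst G \<and> card T = 3 \<longrightarrow> c T = None \<or> (\<exists>v\<in>T. c T = Some v)) \<and>
    (\<forall>e\<in>snd G. \<exists>v\<in>e. points_to c e v)"

lemma C2_colouring_imp_hom_free:
  assumes "r_graph 4 G" and "C2_colouring G c"
  shows "family_hom_free G (tight_cycle_family 4 2)"
proof -
  have "\<forall>e\<in>snd G. card e = 4 \<and> (\<exists>v\<in>e. points_to c e v)"
    using assms unfolding r_graph_def C2_colouring_def by blast
  then have "L mod 4 = 0" if "closed_tight_walk (snd G) z L" for z L
    using coloured_closed_tight_walk_length that by blast
  then show ?thesis
    using family_hom_free_C2_iff[OF assms(1)] by force
qed

text \<open>Continues a tight walk after step n by going round the window at n, so that every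
  position keeps its residue modulo 4.\<close>

definition extend_cyclic :: "(nat \<Rightarrow> 'a) \<Rightarrow> nat \<Rightarrow> nat \<Rightarrow> 'a" where
  "extend_cyclic y n i = (if i < n then y i else y (n + (i - n) mod 4))"

lemma extend_cyclic_below: "i < n + 4 \<Longrightarrow> extend_cyclic y n i = y i"
  unfolding extend_cyclic_def by simp

lemma extend_cyclic_periodic:
  assumes "n \<le> i"
  shows "extend_cyclic y n (i + 4) = extend_cyclic y n i"
proof -
  have "i + 4 - n = (i - n) + 4"
    using assms by simp
  then have "(i + 4 - n) mod 4 = (i - n) mod 4"
    by (simp only: mod_add_self2)
  then show ?thesis
    using assms unfolding extend_cyclic_def by simp
qed

lemma window_shift_periodic:
  assumes "\<forall>i\<ge>n. w (i + 4) = w i"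
  shows "window w (n + s) = window w n"
proof (induction s)
  case (Suc s)
  have "w (n + s + 4) = w (n + s)"
    using assms by simp
  then have "window w (n + Suc s) = window w (n + s)"
    unfolding window_def by (auto simp: numeral_eq_Suc)
  then show ?case
    using Suc by simp
qed simp

lemma window_extend_cyclic: "window (extend_cyclic y n) i = (if i \<le> n then window y i else window y n)"
proof (cases "i \<le> n")
  case True
  then show ?thesis
    unfolding window_def by (simp add: extend_cyclic_below)
next
  case False
  then obtain s where "i = n + s"
    using le_Suc_ex by (metis nat_le_linear)
  then have "window (extend_cyclic y n) i = window (extend_cyclic y n) n"
    using window_shift_periodic[of n "extend_cyclic y n"] extend_cyclic_periodic by blast
  also have "\<dots> = window y n"
    unfolding window_def by (simp add: extend_cyclic_below)
  finally show ?thesis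
    using False by simp
qed

lemma tight_walk_extend_cyclic:
  "tight_walk E y n \<Longrightarrow> window (extend_cyclic y n) i \<in> E"
  unfolding tight_walk_def window_extend_cyclic by simp

lemma extend_cyclic_eq_periodic:
  assumes "\<forall>j. n \<le> j \<and> j < n + 4 \<longrightarrow> y j = h j" and "\<forall>i. h (i + 4) = h i" and "n \<le> j"
  shows "extend_cyclic y n j = h j"
proof -
  have "extend_cyclic y n j = h (n + (j - n) mod 4)"
    using assms(1,3) unfolding extend_cyclic_def by simp
  also have "\<dots> = h (n + (j - n) mod 4 + (j - n) div 4 * 4)"
    by (rule periodic_add_mult[OF assms(2), symmetric])
  also have "n + (j - n) mod 4 + (j - n) div 4 * 4 = j"
    using assms(3) by simp
  finally show ?thesis .
qed

lemma tight_walk_exchange: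
  assumes walk: "tight_walk E y m" and f: "window y m = f" "card f = 4" and "y m = a"
    and diff: "f - f' = {a}" "f' - f = {b}" and "f' \<in> E"
  shows "tight_walk E (y(m + 4 := b)) (m + 1)" and "window (y(m + 4 := b)) (m + 1) = f'"
    and "\<forall>j. m < j \<and> j < m + 4 \<longrightarrow> y j \<in> f \<inter> f'"
proof -
  have "distinct [y m, y (m + 1), y (m + 2), y (m + 3)]"
    using f by (intro distinct_window) simp
  moreover have "f = {a, y (m + 1), y (m + 2), y (m + 3)}"
    using f(1) \<open>y m = a\<close> unfolding window_def by simp
  ultimately have "{y (m + 1), y (m + 2), y (m + 3)} = f - {a}"
    using \<open>y m = a\<close> by auto
  also have "\<dots> = f \<inter> f'"
    using diff(1) by blast
  finally have common: "{y (m + 1), y (m + 2), y (m + 3)} = f \<inter> f'" .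
  have "window (y(m + 4 := b)) (m + 1) = {y (m + 1), y (m + 2), y (m + 3), b}"
    unfolding window_def by (simp add: numeral_eq_Suc)
  also have "\<dots> = f'"
    using common diff by auto
  finally show new: "window (y(m + 4 := b)) (m + 1) = f'" .
  have "window (y(m + 4 := b)) i = window y i" if "i \<le> m" for i
    using that unfolding window_def by simp
  then show "tight_walk E (y(m + 4 := b)) (m + 1)"
    using walk new \<open>f' \<in> E\<close> unfolding tight_walk_def by (auto simp: le_Suc_eq)
  show "\<forall>j. m < j \<and> j < m + 4 \<longrightarrow> y j \<in> f \<inter> f'"
  proof (intro allI impI)
    fix j
    assume "m < j \<and> j < m + 4"
    then have "j = m + 1 \<or> j = m + 2 \<or> j = m + 3"
      by arith
    then show "y j \<in> f \<inter> f'"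
      using common by blast
  qed
qed

text \<open>Meaningful when f and f' share three vertices: then f' - f is a singleton.\<close>

definition adj_map :: "'a set \<Rightarrow> 'a set \<Rightarrow> 'a \<Rightarrow> 'a" where
  "adj_map f f' u = (if u \<in> f' then u else the_elem (f' - f))"

lemma adj_map_eq: "f' - f = {b} \<Longrightarrow> adj_map f f' u = (if u \<in> f' then u else b)"
  unfolding adj_map_def by simp

lemma tight_walk_step_labelled:
  assumes walk: "tight_walk E y n" and f: "window y n = f" "card f = 4"
    and labels: "\<forall>j. n \<le> j \<and> j < n + 4 \<longrightarrow> y j = h j" and h_periodic: "\<forall>i. h (i + 4) = h i"
    and diff: "f - f' = {a}" "f' - f = {b}" and "f' \<in> E"
  obtains y' n' where "\<forall>i<n + 4. y' i = y i" "tight_walk E y' n'" "window y' n' = f'"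
    "\<forall>j. n' \<le> j \<and> j < n' + 4 \<longrightarrow> y' j = adj_map f f' (h j)"
proof -
  obtain k where "k < 4" "y (n + k) = a"
    using window_memE[of a y n] diff(1) f(1) by blast
  define z where "z = extend_cyclic y n"
  define m where "m = n + k"
  have z_labels: "z j = h j" if "n \<le> j" for j
    using extend_cyclic_eq_periodic[OF labels h_periodic that] unfolding z_def .
  have "tight_walk E z m"
    using tight_walk_extend_cyclic[OF walk] unfolding z_def tight_walk_def by blast
  moreover have "window z m = f" "z m = a"
    using window_extend_cyclic[of y n m] extend_cyclic_below[of m n y] \<open>k < 4\<close> f(1)
      \<open>y (n + k) = a\<close> unfolding z_def m_def by simp_all
  ultimately have exchange: "tight_walk E (z(m + 4 := b)) (m + 1)"
    "window (z(m + 4 := b)) (m + 1) = f'" "\<forall>j. m < j \<and> j < m + 4 \<longrightarrow> z j \<in> f \<inter> f'"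
    using tight_walk_exchange[of E z m f a f' b] f(2) diff \<open>f' \<in> E\<close> by simp_all
  have "(z(m + 4 := b)) j = adj_map f f' (h j)" if "m + 1 \<le> j" "j < m + 1 + 4" for j
  proof (cases "j = m + 4")
    case True
    then have "h j = a"
      using z_labels[of m] h_periodic \<open>z m = a\<close> unfolding m_def by simp
    then show ?thesis
      using True diff unfolding adj_map_eq[OF diff(2)] by auto
  next
    case False
    then have "m < j" "j < m + 4"
      using that by simp_all
    then have "z j \<in> f'" "z j = h j"
      using exchange(3) z_labels[of j] unfolding m_def by auto
    then show ?thesis
      using False unfolding adj_map_def by simp
  qed
  moreover have "\<forall>i<n + 4. (z(m + 4 := b)) i = y i"
    using extend_cyclic_below[of _ n y] unfolding z_def m_def by auto
  ultimately show thesis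
    using that exchange(1,2) by blast
qed

lemma closed_tight_walk_wrap:
  assumes windows: "\<forall>i. window y i \<in> E" and wrap: "\<forall>t<4. y (L + t) = y t" and "4 \<le> L"
  shows "closed_tight_walk E (\<lambda>i. y (i mod L)) L"
proof -
  have shift: "y ((i + t) mod L) = y (i mod L + t)" if "t < 4" for i t
  proof -
    have "i mod L < L"
      using \<open>4 \<le> L\<close> by simp
    have mod_eq: "(i + t) mod L = (i mod L + t) mod L"
      by (simp add: mod_add_left_eq)
    show ?thesis
    proof (cases "i mod L + t < L")
      case True
      then show ?thesis
        using mod_eq by simp
    next
      case False
      define s where "s = i mod L + t - L"
      have "s < 4" "i mod L + t = s + L"
        using False that \<open>i mod L < L\<close> unfolding s_def by simp_all
      then have "(i + t) mod L = s"
        using mod_eq \<open>4 \<le> L\<close> by simp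
      moreover have "y (i mod L + t) = y s"
        using wrap \<open>s < 4\<close> \<open>i mod L + t = s + L\<close> by (metis add.commute)
      ultimately show ?thesis
        by simp
    qed
  qed
  have "window (\<lambda>i. y (i mod L)) i = window y (i mod L)" for i
    using shift[of 0 i] shift[of 1 i] shift[of 2 i] shift[of 3 i] unfolding window_def by simp
  then show ?thesis
    unfolding closed_tight_walk_def using windows by simp
qed

lemma permutation_fixing_point_cases:
  assumes "distinct [u, b, c, d]" and "inj_on k {u, b, c, d}" and "k ` {u, b, c, d} \<subseteq> {u, b, c, d}"
    and "k u = u"
  shows "(k b = b \<and> k c = c \<and> k d = d) \<or> (k b = b \<and> k c = d \<and> k d = c) \<or>
    (k b = c \<and> k c = b \<and> k d = d) \<or> (k b = c \<and> k c = d \<and> k d = b) \<or>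
    (k b = d \<and> k c = b \<and> k d = c) \<or> (k b = d \<and> k c = c \<and> k d = b)"
proof -
  have distinct: "u \<noteq> b" "u \<noteq> c" "u \<noteq> d" "b \<noteq> c" "b \<noteq> d" "c \<noteq> d"
    using assms(1) by auto
  have "k x \<noteq> k y" if "x \<in> {u, b, c, d}" "y \<in> {u, b, c, d}" "x \<noteq> y" for x y
    using assms(2) that by (meson inj_onD)
  then have "k b \<noteq> k c" "k b \<noteq> k d" "k c \<noteq> k d" "k b \<noteq> u" "k c \<noteq> u" "k d \<noteq> u"
    using distinct assms(4) by (metis insertCI)+
  moreover have "k b = u \<or> k b = b \<or> k b = c \<or> k b = d" "k c = u \<or> k c = b \<or> k c = c \<or> k c = d"
    "k d = u \<or> k d = b \<or> k d = c \<or> k d = d"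
    using assms(3) by blast+
  ultimately show ?thesis
    using distinct by (elim disjE) simp_all
qed

lemma permutation_moving_point_cases:
  assumes "distinct [u, b, c, d]" and "inj_on g {u, b, c, d}" and "g ` {u, b, c, d} \<subseteq> {u, b, c, d}"
    and "g u = b" and "\<exists>x\<in>{u, b, c, d}. g x = x"
  shows "(g b = u \<and> g c = c \<and> g d = d) \<or> (g b = c \<and> g c = u \<and> g d = d) \<or>
    (g b = d \<and> g c = c \<and> g d = u)"
proof -
  have distinct: "u \<noteq> b" "u \<noteq> c" "u \<noteq> d" "b \<noteq> c" "b \<noteq> d" "c \<noteq> d"
    using assms(1) by auto
  have "g x \<noteq> g y" if "x \<in> {u, b, c, d}" "y \<in> {u, b, c, d}" "x \<noteq> y" for x y
    using assms(2) that by (meson inj_onD)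
  then have "g b \<noteq> g c" "g b \<noteq> g d" "g c \<noteq> g d" "g b \<noteq> b" "g c \<noteq> b" "g d \<noteq> b"
    using distinct assms(4) by (metis insertCI)+
  moreover have "g b = u \<or> g b = c \<or> g b = d" "g c = u \<or> g c = c \<or> g c = d"
    "g d = u \<or> g d = c \<or> g d = d"
    using assms(3) calculation(4-6) by blast+
  moreover have "g c = c \<or> g d = d"
    using assms(4,5) distinct calculation(4) by auto
  ultimately show ?thesis
    using distinct assms(4) by (elim disjE) simp_all
qed

lemma minimal_fixed_set_invariant_4:
  assumes X: "X = {u, b, c, d}" "distinct [u, b, c, d]"
    and perm: "\<forall>h\<in>M. inj_on h X \<and> h ` X \<subseteq> X"
    and comp: "\<forall>h\<in>M. \<forall>h'\<in>M. h \<circ> h' \<in> M"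
    and fixed: "\<forall>h\<in>M. \<exists>x\<in>X. h x = x"
    and minimal: "\<forall>h\<in>M. (\<forall>x\<in>X. h x = x \<longrightarrow> k x = x) \<longrightarrow> (\<forall>x\<in>X. k x = x \<longrightarrow> h x = x)"
    and k: "k \<in> M" "k u = u"
    and g: "g \<in> M" "g u = b"
  shows False
proof -
  have distinct: "u \<noteq> b" "u \<noteq> c" "u \<noteq> d" "b \<noteq> c" "b \<noteq> d" "c \<noteq> d"
    using X(2) by auto
  have kg: "k \<circ> g \<in> M" and kgg: "k \<circ> g \<circ> g \<in> M"
    using comp g(1) k(1) by blast+
  have "inj_on k {u, b, c, d}" "k ` {u, b, c, d} \<subseteq> {u, b, c, d}"
    using perm k(1) unfolding X(1) by blast+
  then have k_cases: "(k b = b \<and> k c = c \<and> k d = d) \<or> (k b = b \<and> k c = d \<and> k d = c) \<or>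
      (k b = c \<and> k c = b \<and> k d = d) \<or> (k b = c \<and> k c = d \<and> k d = b) \<or>
      (k b = d \<and> k c = b \<and> k d = c) \<or> (k b = d \<and> k c = c \<and> k d = b)"
    using permutation_fixing_point_cases[of u b c d k] X(2) k(2) by blast
  have "inj_on g {u, b, c, d}" "g ` {u, b, c, d} \<subseteq> {u, b, c, d}" "\<exists>x\<in>{u, b, c, d}. g x = x"
    using perm fixed g(1) unfolding X(1) by blast+
  then have g_cases: "(g b = u \<and> g c = c \<and> g d = d) \<or> (g b = c \<and> g c = u \<and> g d = d) \<or>
      (g b = d \<and> g c = c \<and> g d = u)"
    using permutation_moving_point_cases[of u b c d g] X(2) g(2) by blast
  \<comment> \<open>In each of the 3 * 6 cases, one of g, k \<circ> g, k \<circ> g \<circ> g has no fixed point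
    or fixes strictly fewer points than k.\<close>
  let ?minimal = "\<lambda>h. (h u = u \<longrightarrow> k u = u) \<and> (h b = b \<longrightarrow> k b = b) \<and> (h c = c \<longrightarrow> k c = c) \<and>
    (h d = d \<longrightarrow> k d = d) \<longrightarrow>
    (k u = u \<longrightarrow> h u = u) \<and> (k b = b \<longrightarrow> h b = b) \<and> (k c = c \<longrightarrow> h c = c) \<and> (k d = d \<longrightarrow> h d = d)"
  have contra: "\<not> ((k (g u) = u \<or> k (g b) = b \<or> k (g c) = c \<or> k (g d) = d) \<and>
      (k (g (g u)) = u \<or> k (g (g b)) = b \<or> k (g (g c)) = c \<or> k (g (g d)) = d) \<and>
      ?minimal g \<and> ?minimal (\<lambda>x. k (g x)) \<and> ?minimal (\<lambda>x. k (g (g x))))"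
    using g_cases k_cases by (elim disjE conjE) (use distinct g(2) k(2) in simp_all)
  note expand = X(1) ball_simps bex_simps simp_thms comp_apply
  have "(k (g u) = u \<or> k (g b) = b \<or> k (g c) = c \<or> k (g d) = d) \<and>
    (k (g (g u)) = u \<or> k (g (g b)) = b \<or> k (g (g c)) = c \<or> k (g (g d)) = d) \<and>
    ?minimal g \<and> ?minimal (\<lambda>x. k (g x)) \<and> ?minimal (\<lambda>x. k (g (g x)))"
    using bspec[OF fixed kg] bspec[OF fixed kgg]
      bspec[OF minimal g(1)] bspec[OF minimal kg] bspec[OF minimal kgg] by (unfold expand) (intro conjI)
  with contra show False
    by (rule notE)
qed

lemma minimal_fixed_set_exists:
  assumes "finite X" and "M \<noteq> {}"
  obtains k where "k \<in> M"
    "\<forall>h\<in>M. (\<forall>x\<in>X. h x = x \<longrightarrow> k x = x) \<longrightarrow> (\<forall>x\<in>X. k x = x \<longrightarrow> h x = x)"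
proof -
  let ?fix = "\<lambda>h. {x\<in>X. h x = x}"
  obtain k where k: "k \<in> M" "\<forall>h\<in>M. card (?fix k) \<le> card (?fix h)"
    using ex_has_least_nat[of "\<lambda>h. h \<in> M" _ "\<lambda>h. card (?fix h)"] assms(2) by blast
  have "\<forall>x\<in>X. k x = x \<longrightarrow> h x = x" if "h \<in> M" "\<forall>x\<in>X. h x = x \<longrightarrow> k x = x" for h
  proof -
    have "?fix h \<subseteq> ?fix k" "card (?fix k) \<le> card (?fix h)"
      using k(2) that by auto
    then have "?fix h = ?fix k"
      using \<open>finite X\<close> by (intro card_seteq) auto
    then show ?thesis
      by blast
  qed
  then show thesis
    using that k(1) by blast
qed

lemma common_fixed_point_card_4:
  assumes X: "card X = 4"
    and perm: "\<forall>h\<in>M. inj_on h X \<and> h ` X \<subseteq> X"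
    and comp: "\<forall>h\<in>M. \<forall>h'\<in>M. h \<circ> h' \<in> M"
    and fixed: "\<forall>h\<in>M. \<exists>x\<in>X. h x = x"
  shows "\<exists>x\<in>X. \<forall>h\<in>M. h x = x"
proof (cases "M = {}")
  case True
  have "X \<noteq> {}"
    using X by auto
  then show ?thesis
    using True by blast
next
  case False
  have "finite X"
    using X by (simp add: card_ge_0_finite)
  then obtain k where k: "k \<in> M"
    and minimal: "\<forall>h\<in>M. (\<forall>x\<in>X. h x = x \<longrightarrow> k x = x) \<longrightarrow> (\<forall>x\<in>X. k x = x \<longrightarrow> h x = x)"
    using minimal_fixed_set_exists[OF _ False] by blast
  obtain u where u: "u \<in> X" "k u = u"
    using fixed k by blast
  have "g u = u" if g: "g \<in> M" for g
  proof (rule ccontr)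
    assume "g u \<noteq> u"
    moreover have "g u \<in> X"
      using perm g u(1) by blast
    ultimately have "card (X - {u, g u}) = 2"
      using X u(1) \<open>finite X\<close> by (simp add: card_Diff_subset)
    then obtain c d where "X - {u, g u} = {c, d}" "c \<noteq> d"
      unfolding card_2_iff by blast
    then have "X = {u, g u, c, d}" "distinct [u, g u, c, d]"
      using \<open>g u \<noteq> u\<close> \<open>g u \<in> X\<close> u(1) by auto
    from minimal_fixed_set_invariant_4[OF this perm comp fixed minimal k u(2) g refl]
    show False .
  qed
  then show ?thesis
    using u(1) by blast
qed

lemma derangement_card_4_cases:
  assumes "card e = 4" and "inj_on m e" and "m ` e \<subseteq> e" and "\<forall>u\<in>e. m u \<noteq> u"
  obtains p q r s where "e = {p, q, r, s}"
    "(m p = q \<and> m q = r \<and> m r = s \<and> m s = p) \<or> (m p = q \<and> m q = p \<and> m r = s \<and> m s = r)"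
proof -
  have "finite e" "e \<noteq> {}"
    using assms(1) by (auto simp: card_ge_0_finite)
  then obtain p where "p \<in> e"
    by blast
  define q where "q = m p"
  have "q \<in> e" "q \<noteq> p"
    using assms(3,4) \<open>p \<in> e\<close> unfolding q_def by auto
  then have "card (e - {p, q}) = 2"
    using assms(1) \<open>p \<in> e\<close> \<open>finite e\<close> by (simp add: card_Diff_subset)
  then obtain c d where "e - {p, q} = {c, d}" "c \<noteq> d"
    unfolding card_2_iff by blast
  then have e: "e = {p, q, c, d}" and distinct: "p \<noteq> q" "p \<noteq> c" "p \<noteq> d" "q \<noteq> c" "q \<noteq> d" "c \<noteq> d"
    using \<open>p \<in> e\<close> \<open>q \<in> e\<close> \<open>q \<noteq> p\<close> by auto
  have inj: "m x \<noteq> m y" if "x \<in> e" "y \<in> e" "x \<noteq> y" for x y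
    using assms(2) that by (meson inj_onD)
  have "m q \<noteq> m c" "m q \<noteq> m d" "m c \<noteq> m d" "m c \<noteq> q" "m d \<noteq> q"
    using inj[unfolded e] distinct unfolding q_def by (metis insertCI)+
  moreover have "m q = p \<or> m q = c \<or> m q = d" "m c = p \<or> m c = q \<or> m c = d" "m d = p \<or> m d = q \<or> m d = c"
    using assms(3,4) distinct unfolding e q_def by auto
  ultimately have "(m q = p \<and> m c = d \<and> m d = c) \<or> (m q = c \<and> m c = d \<and> m d = p) \<or>
      (m q = d \<and> m d = c \<and> m c = p)"
    using distinct by (elim disjE) simp_all
  moreover have "e = {p, q, d, c}"
    using e by blast
  ultimately show thesis
    using that[of p q c d] that[of p q d c] e unfolding q_def by (elim disjE) simp_all
qed

lemma cyclic_list_rotation: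
  assumes "\<forall>j<4. m (xs ! j) = xs ! ((j + k) mod 4)"
  shows "m (xs ! (i mod 4)) = xs ! ((i + k) mod 4)"
  using assms by (simp add: mod_add_left_eq)

lemma derangement_card_4_rotation:
  assumes "card e = 4" and "inj_on m e" and "m ` e \<subseteq> e" and "\<forall>u\<in>e. m u \<noteq> u"
  obtains x k where "window x 0 = e" "\<forall>i. x (i + 4) = x i" "0 < k" "k < 4"
    "\<forall>i. m (x i) = x (i + k)"
proof -
  have four: "j < 4 \<Longrightarrow> j = 0 \<or> j = 1 \<or> j = 2 \<or> j = 3" for j :: nat
    by arith
  obtain p q r s where e: "e = {p, q, r, s}"
    and cycles: "(m p = q \<and> m q = r \<and> m r = s \<and> m s = p) \<or> (m p = q \<and> m q = p \<and> m r = s \<and> m s = r)"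
    by (rule derangement_card_4_cases[OF assms])
  then obtain a0 a1 a2 a3 k where "e = {a0, a1, a2, a3}" "0 < k" "k < 4"
    and rotation: "\<forall>j<4. m ([a0, a1, a2, a3] ! j) = [a0, a1, a2, a3] ! ((j + k) mod 4)"
  proof (elim disjE)
    assume "m p = q \<and> m q = r \<and> m r = s \<and> m s = p"
    then show thesis
      using that[of p q r s 1] e four by fastforce
  next
    assume "m p = q \<and> m q = p \<and> m r = s \<and> m s = r"
    then show thesis
      using that[of p r q s 2] e four by (fastforce simp: insert_commute)
  qed
  then show thesis
    using that[of "\<lambda>i. [a0, a1, a2, a3] ! (i mod 4)" k] cyclic_list_rotation[OF rotation]
    by (simp add: window_def)
qed

definition colouring_of :: "'a set set \<Rightarrow> ('a set \<Rightarrow> 'a) \<Rightarrow> 'a set \<Rightarrow> 'a option" where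
  "colouring_of E v T =
    (if \<exists>e\<in>E. T \<subseteq> e \<and> v e \<in> T then Some (v (SOME e. e \<in> E \<and> T \<subseteq> e \<and> v e \<in> T)) else None)"

lemma colouring_of_None: "\<not> (\<exists>e\<in>E. T \<subseteq> e \<and> v e \<in> T) \<Longrightarrow> colouring_of E v T = None"
  unfolding colouring_of_def by simp

lemma colouring_of_Some:
  assumes "\<exists>e\<in>E. T \<subseteq> e \<and> v e \<in> T"
  shows "\<exists>e'\<in>E. T \<subseteq> e' \<and> v e' \<in> T \<and> colouring_of E v T = Some (v e')"
proof -
  let ?e = "SOME e. e \<in> E \<and> T \<subseteq> e \<and> v e \<in> T"
  have "\<exists>e. e \<in> E \<and> T \<subseteq> e \<and> v e \<in> T"
    using assms by blast
  then have "?e \<in> E \<and> T \<subseteq> ?e \<and> v ?e \<in> T"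
    by (rule someI_ex)
  moreover have "colouring_of E v T = Some (v ?e)"
    using assms unfolding colouring_of_def by simp
  ultimately show ?thesis
    by blast
qed

lemma colouring_of_range: "colouring_of E v T = None \<or> (\<exists>w\<in>T. colouring_of E v T = Some w)"
proof (cases "\<exists>e\<in>E. T \<subseteq> e \<and> v e \<in> T")
  case True
  then obtain e' where "v e' \<in> T" "colouring_of E v T = Some (v e')"
    using colouring_of_Some by blast
  then show ?thesis
    by blast
qed (simp add: colouring_of_None)

locale four_uniform =
  fixes E :: "'a set set"
  assumes card_edge: "e \<in> E \<Longrightarrow> card e = 4"
begin

lemma finite_edge: "e \<in> E \<Longrightarrow> finite e"
  using card_edge card.infinite by fastforce

lemma adjacent_edges_diff:
  assumes "f \<in> E" "f' \<in> E" "card (f \<inter> f') = 3"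
  obtains a b where "f - f' = {a}" "f' - f = {b}"
proof -
  have "card (f - f') = 1" "card (f' - f) = 1"
    using assms card_edge finite_edge by (simp_all add: card_Diff_subset_Int Int_commute)
  then show thesis
    using that by (metis card_1_singletonE)
qed

lemma adj_map_bij:
  assumes "f \<in> E" "f' \<in> E" "card (f \<inter> f') = 3"
  shows "inj_on (adj_map f f') f" "adj_map f f' ` f \<subseteq> f'" "\<And>u. u \<in> f \<Longrightarrow> adj_map f' f (adj_map f f' u) = u"
proof -
  obtain a b where diff: "f - f' = {a}" "f' - f = {b}"
    using adjacent_edges_diff[OF assms] .
  have out: "u = a" if "u \<in> f" "u \<notin> f'" for u
    using diff(1) that by blast
  have "b \<in> f'" "b \<notin> f"
    using diff(2) by blast+
  show "inj_on (adj_map f f') f"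
    using out \<open>b \<notin> f\<close> unfolding inj_on_def adj_map_eq[OF diff(2)] by (auto split: if_split_asm)
  show "adj_map f f' ` f \<subseteq> f'"
    using \<open>b \<in> f'\<close> unfolding adj_map_eq[OF diff(2)] by auto
  show "adj_map f' f (adj_map f f' u) = u" if "u \<in> f" for u
  proof (cases "u \<in> f'")
    case False
    then show ?thesis
      using out[OF that] \<open>b \<notin> f\<close> unfolding adj_map_eq[OF diff(1)] adj_map_eq[OF diff(2)] by simp
  qed (use that in \<open>simp add: adj_map_eq[OF diff(1)] adj_map_eq[OF diff(2)]\<close>)
qed

inductive transport :: "'a set \<Rightarrow> 'a set \<Rightarrow> ('a \<Rightarrow> 'a) \<Rightarrow> bool" where
  refl: "e \<in> E \<Longrightarrow> transport e e id"
| step: "transport e f g \<Longrightarrow> f' \<in> E \<Longrightarrow> card (f \<inter> f') = 3 \<Longrightarrow> transport e f' (adj_map f f' \<circ> g)"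

lemma transport_edges: "transport e f g \<Longrightarrow> e \<in> E \<and> f \<in> E"
  by (induction rule: transport.induct) auto

lemma transport_bij: "transport e f g \<Longrightarrow> inj_on g e \<and> g ` e \<subseteq> f"
proof (induction rule: transport.induct)
  case (step e f g f')
  then have "f \<in> E"
    using transport_edges by blast
  note adj = adj_map_bij[OF this step.hyps(2,3)]
  have "inj_on (adj_map f f' \<circ> g) e"
    using comp_inj_on step.IH inj_on_subset[OF adj(1)] by blast
  moreover have "(adj_map f f' \<circ> g) ` e \<subseteq> f'"
    using step.IH adj(2) by auto
  ultimately show ?case ..
qed simp

lemma transport_trans: "transport f h k \<Longrightarrow> transport e f g \<Longrightarrow> transport e h (k \<circ> g)"
proof (induction rule: transport.induct)
  case (step f h k h')
  show ?case
    unfolding comp_assoc using transport.step[OF step.IH[OF step.prems] step.hyps(2,3)] .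
qed simp

lemma transport_reverse:
  "transport e f g \<Longrightarrow> \<exists>h. transport f e h \<and> (\<forall>x\<in>e. h (g x) = x)"
proof (induction rule: transport.induct)
  case (refl e)
  then show ?case
    using transport.refl by fastforce
next
  case (step e f g f')
  then obtain h where h: "transport f e h" "\<forall>x\<in>e. h (g x) = x"
    by blast
  have "f \<in> E"
    using step.hyps(1) transport_edges by blast
  then have "transport f' f (adj_map f' f \<circ> id)"
    using transport.step[OF transport.refl[OF step.hyps(2)]] step.hyps(3) by (simp add: Int_commute)
  then have "transport f' e (h \<circ> adj_map f' f)"
    using transport_trans[OF h(1)] by simp
  moreover have "\<forall>x\<in>e. (h \<circ> adj_map f' f) ((adj_map f f' \<circ> g) x) = x"
    using adj_map_bij[OF \<open>f \<in> E\<close> step.hyps(2,3)] transport_bij[OF step.hyps(1)] h(2) by auto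
  ultimately show ?case
    by blast
qed

lemma transport_lift:
  assumes "transport e f g" and "window x 0 = e" and x_periodic: "\<forall>i. x (i + 4) = x i"
  shows "\<exists>y n. (\<forall>i<4. y i = x i) \<and> tight_walk E y n \<and> window y n = f \<and>
    (\<forall>j. n \<le> j \<and> j < n + 4 \<longrightarrow> y j = g (x j))"
  using assms(1,2)
proof (induction rule: transport.induct)
  case (refl e)
  then show ?case
    by (intro exI[of _ x] exI[of _ 0]) (simp add: tight_walk_def)
next
  case (step e f g f')
  then obtain y n where y: "\<forall>i<4. y i = x i" "tight_walk E y n" "window y n = f"
    "\<forall>j. n \<le> j \<and> j < n + 4 \<longrightarrow> y j = g (x j)"
    by blast
  have "f \<in> E"
    using step.hyps(1) transport_edges by blast
  obtain a b where diff: "f - f' = {a}" "f' - f = {b}"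
    using adjacent_edges_diff[OF \<open>f \<in> E\<close> step.hyps(2,3)] .
  have "\<forall>i. g (x (i + 4)) = g (x i)"
    using x_periodic by simp
  then obtain y' n' where "\<forall>i<n + 4. y' i = y i" "tight_walk E y' n'" "window y' n' = f'"
    "\<forall>j. n' \<le> j \<and> j < n' + 4 \<longrightarrow> y' j = adj_map f f' (g (x j))"
    using tight_walk_step_labelled[OF y(2,3) card_edge[OF \<open>f \<in> E\<close>] y(4) _ diff step.hyps(2)]
    by blast
  then show ?case
    using y(1) by (intro exI[of _ y'] exI[of _ n']) auto
qed

lemma transport_derangement_closed_walk:
  assumes "transport e e m" and "\<forall>u\<in>e. m u \<noteq> u"
  obtains z L where "4 < L" "L mod 4 \<noteq> 0" "closed_tight_walk E z L"
proof -
  have "card e = 4" "inj_on m e" "m ` e \<subseteq> e"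
    using card_edge transport_edges[OF assms(1)] transport_bij[OF assms(1)] by simp_all
  then obtain x k where x: "window x 0 = e" "\<forall>i. x (i + 4) = x i" "0 < k" "k < 4"
    "\<forall>i. m (x i) = x (i + k)"
    using derangement_card_4_rotation assms(2) by blast
  then obtain y n where y: "\<forall>i<4. y i = x i" "tight_walk E y n"
    "\<forall>j. n \<le> j \<and> j < n + 4 \<longrightarrow> y j = x (j + k)"
    using transport_lift[OF assms(1) x(1,2)] by auto
  define y' where "y' = extend_cyclic y n"
  define L where "L = 4 * (n + 2) - k" \<comment> \<open>any L > max n 4 with 4 dvd L + k would do\<close>
  have "\<forall>i. x (i + 4 + k) = x (i + k)"
    using x(2) by (metis add.commute add.left_commute)
  then have "y' j = x (j + k)" if "n \<le> j" for j
    using extend_cyclic_eq_periodic[OF y(3) _ that] unfolding y'_def by simp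
  then have "y' (L + t) = x t" for t
    using x(2) periodic_add_mult[of x 4 t "n + 2"] x(3,4) unfolding L_def
    by (simp add: algebra_simps)
  moreover have "y' t = x t" if "t < 4" for t
    using y(1) that extend_cyclic_below[of t n y] unfolding y'_def by simp
  ultimately have "closed_tight_walk E (\<lambda>i. y' (i mod L)) L"
    using closed_tight_walk_wrap[of y' E L] tight_walk_extend_cyclic[OF y(2)] x(4)
    unfolding y'_def L_def by simp
  moreover have "4 < L" "L mod 4 \<noteq> 0"
    using x(3,4) unfolding L_def by presburger+
  ultimately show thesis
    using that by blast
qed

lemma transport_loop_fixed_point:
  assumes no_walk: "\<forall>z L. 4 < L \<and> L mod 4 = 2 \<longrightarrow> \<not> closed_tight_walk E z L"
    and "transport e e m"
  shows "\<exists>u\<in>e. m u = u"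
proof (rule ccontr)
  assume "\<not> (\<exists>u\<in>e. m u = u)"
  then obtain z L where "4 < L" "L mod 4 \<noteq> 0" "closed_tight_walk E z L"
    using transport_derangement_closed_walk[OF assms(2)] by blast
  moreover have "L mod 4 = 2 \<or> (2 * L) mod 4 = 2"
    using \<open>L mod 4 \<noteq> 0\<close> by presburger
  ultimately show False
    using no_walk closed_tight_walk_double[of E z L] by auto
qed

lemma transport_common_fixed_point:
  assumes "e \<in> E" and "\<And>m. transport e e m \<Longrightarrow> \<exists>u\<in>e. m u = u"
  shows "\<exists>u\<in>e. \<forall>m. transport e e m \<longrightarrow> m u = u"
  using common_fixed_point_card_4[of e "{m. transport e e m}"] card_edge[OF assms(1)]
    transport_bij transport_trans assms(2) by auto

lemma transport_image_unique:
  assumes "transport r e g" "transport r e g'" "u \<in> r" "\<forall>m. transport r r m \<longrightarrow> m u = u"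
  shows "g u = g' u"
proof -
  obtain h where h: "transport e r h" "\<forall>x\<in>r. h (g' x) = x"
    using transport_reverse[OF assms(2)] by blast
  have "h (g u) = u"
    using assms(4) transport_trans[OF h(1) assms(1)] by fastforce
  then have "h (g u) = h (g' u)"
    using assms(3) h(2) by simp
  moreover have "inj_on h e" "g u \<in> e" "g' u \<in> e"
    using transport_bij h(1) assms(1-3) by blast+
  ultimately show ?thesis
    by (meson inj_onD)
qed

lemma transport_source_iff:
  assumes "transport e f g"
  shows "(\<exists>g. transport r e g) \<longleftrightarrow> (\<exists>g. transport r f g)"
  using transport_trans[OF assms] transport_trans transport_reverse[OF assms] by blast

lemma transport_representative:
  obtains rep where "\<And>e. e \<in> E \<Longrightarrow> \<exists>g. transport (rep e) e g"
    and "\<And>e f g. transport e f g \<Longrightarrow> rep f = rep e"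
proof -
  define rep where "rep e = (SOME r. \<exists>g. transport r e g)" for e
  have "\<exists>g. transport (rep e) e g" if "e \<in> E" for e
  proof -
    have "\<exists>r g. transport r e g"
      using transport.refl[OF that] by blast
    then show ?thesis
      unfolding rep_def by (rule someI_ex)
  qed
  moreover have "rep f = rep e" if "transport e f g" for e f g
    unfolding rep_def using transport_source_iff[OF that] by simp
  ultimately show thesis
    by (rule that)
qed

lemma consistent_pointer:
  assumes common: "\<And>e. e \<in> E \<Longrightarrow> \<exists>u\<in>e. \<forall>m. transport e e m \<longrightarrow> m u = u"
  obtains v where "\<forall>e\<in>E. v e \<in> e"
    and "\<forall>e\<in>E. \<forall>f\<in>E. card (e \<inter> f) = 3 \<longrightarrow> v f = adj_map e f (v e)"
proof -
  obtain rep where rep: "\<And>e. e \<in> E \<Longrightarrow> \<exists>g. transport (rep e) e g"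
    and rep_eq: "\<And>e f g. transport e f g \<Longrightarrow> rep f = rep e"
    using transport_representative by blast
  define base where "base r = (SOME u. u \<in> r \<and> (\<forall>m. transport r r m \<longrightarrow> m u = u))" for r
  define v where "v e = (SOME g. transport (rep e) e g) (base (rep e))" for e
  have base: "base r \<in> r \<and> (\<forall>m. transport r r m \<longrightarrow> m (base r) = base r)" if "r \<in> E" for r
    using common[OF that] unfolding base_def Bex_def by (rule someI_ex)
  have v: "v e = g (base (rep e))" if g: "transport (rep e) e g" for e g
  proof -
    have "transport (rep e) e (SOME g. transport (rep e) e g)"
      using g by (rule someI[of "\<lambda>g. transport (rep e) e g"])
    moreover have "rep e \<in> E"
      using transport_edges[OF g] by blast
    ultimately show ?thesis
      unfolding v_def using transport_image_unique[OF _ g] base by blast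
  qed
  have "v e \<in> e" if e: "e \<in> E" for e
    using rep[OF e] v base transport_bij transport_edges by blast
  moreover have "v f = adj_map e f (v e)" if adj: "e \<in> E" "f \<in> E" "card (e \<inter> f) = 3" for e f
  proof -
    obtain g where g: "transport (rep e) e g"
      using rep[OF adj(1)] by blast
    have "transport e f (adj_map e f \<circ> id)"
      using transport.step[OF transport.refl[OF adj(1)] adj(2,3)] .
    then have "rep f = rep e"
      by (rule rep_eq)
    moreover have "transport (rep e) f (adj_map e f \<circ> g)"
      using transport.step[OF g adj(2,3)] .
    ultimately show ?thesis
      using v g by simp
  qed
  ultimately show thesis
    using that by blast
qed

lemma edges_sharing_triple:
  assumes "e \<in> E" "f \<in> E" "e \<noteq> f" "T \<subseteq> e \<inter> f" "card T = 3"
  shows "e \<inter> f = T"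
proof -
  have "\<not> e \<subseteq> f"
  proof
    assume "e \<subseteq> f"
    then have "e = f"
      using card_subset_eq[OF finite_edge[OF assms(2)]] card_edge assms(1,2) by simp
    then show False
      using assms(3) by contradiction
  qed
  then have "card (e \<inter> f) < card e"
    using finite_edge[OF assms(1)] by (intro psubset_card_mono) auto
  then have "card (e \<inter> f) \<le> card T"
    using card_edge[OF assms(1)] assms(5) by simp
  then show ?thesis
    using card_seteq[of "e \<inter> f" T] finite_edge[OF assms(1)] assms(4) by auto
qed

lemma pointer_on_shared_triple:
  assumes pointer: "\<forall>e\<in>E. v e \<in> e" "\<forall>e\<in>E. \<forall>f\<in>E. card (e \<inter> f) = 3 \<longrightarrow> v f = adj_map e f (v e)"
    and edges: "e \<in> E" "f \<in> E" and T: "T \<subseteq> e \<inter> f" "card T = 3"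
  shows "v e \<in> T \<Longrightarrow> v f = v e" and "v f \<in> T \<Longrightarrow> v e \<in> T"
proof -
  have "v f = v e \<or> (v e \<notin> T \<and> v f \<notin> T)"
  proof (cases "e = f")
    case False
    then have "e \<inter> f = T"
      using edges_sharing_triple[OF edges _ T] by blast
    then obtain a b where diff: "e - f = {a}" "f - e = {b}"
      using adjacent_edges_diff[OF edges] T(2) by metis
    have "v f = adj_map e f (v e)"
      using pointer(2) edges \<open>e \<inter> f = T\<close> T(2) by simp
    then have "v f = (if v e \<in> f then v e else b)"
      unfolding adj_map_eq[OF diff(2)] .
    then show ?thesis
      using pointer(1) edges(1) \<open>e \<inter> f = T\<close> diff(2) by auto
  qed simp
  then show "v e \<in> T \<Longrightarrow> v f = v e" and "v f \<in> T \<Longrightarrow> v e \<in> T"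
    by auto
qed

lemma points_to_colouring_of:
  assumes pointer: "\<forall>e\<in>E. v e \<in> e" "\<forall>e\<in>E. \<forall>f\<in>E. card (e \<inter> f) = 3 \<longrightarrow> v f = adj_map e f (v e)"
    and e: "e \<in> E"
  shows "points_to (colouring_of E v) e (v e)"
  unfolding points_to_def
proof (intro conjI allI impI)
  fix T
  assume T: "T \<subseteq> e \<and> card T = 3 \<and> v e \<in> T"
  then obtain e' where "e' \<in> E" "T \<subseteq> e'" "colouring_of E v T = Some (v e')"
    using colouring_of_Some[of E T v] e by blast
  moreover have "v e' = v e"
    using pointer_on_shared_triple(1)[OF pointer e \<open>e' \<in> E\<close>] T \<open>T \<subseteq> e'\<close> by blast
  ultimately show "colouring_of E v T = Some (v e)"
    by simp
next
  have "v e \<in> e"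
    using pointer(1) e by blast
  then have "card (e - {v e}) = 3"
    using card_edge[OF e] finite_edge[OF e] by simp
  show "colouring_of E v (e - {v e}) = None"
  proof (rule ccontr)
    assume "colouring_of E v (e - {v e}) \<noteq> None"
    then have "\<exists>e'\<in>E. e - {v e} \<subseteq> e' \<and> v e' \<in> e - {v e}"
      using colouring_of_None[of E "e - {v e}" v] by (rule contrapos_np)
    then obtain e' where "e' \<in> E" "e - {v e} \<subseteq> e'" "v e' \<in> e - {v e}"
      by blast
    then have "v e \<in> e - {v e}"
      using pointer_on_shared_triple(2)[OF pointer e \<open>e' \<in> E\<close>, of "e - {v e}"]
        \<open>card (e - {v e}) = 3\<close> by auto
    then show False
      by simp
  qed
qed

end

lemma r_graph_four_uniform: "r_graph 4 G \<Longrightarrow> four_uniform (snd G)"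
  unfolding r_graph_def by unfold_locales blast

lemma hom_free_imp_C2_colouring:
  assumes "r_graph 4 G" and "family_hom_free G (tight_cycle_family 4 2)"
  shows "\<exists>c. C2_colouring G c"
proof -
  interpret four_uniform "snd G"
    using r_graph_four_uniform[OF assms(1)] .
  have no_walk: "\<forall>z L. 4 < L \<and> L mod 4 = 2 \<longrightarrow> \<not> closed_tight_walk (snd G) z L"
    using family_hom_free_C2_iff[OF assms(1)] assms(2) by blast
  have common: "\<exists>u\<in>e. \<forall>m. transport e e m \<longrightarrow> m u = u" if "e \<in> snd G" for e
    using transport_common_fixed_point[OF that transport_loop_fixed_point[OF no_walk]] .
  obtain v where v: "\<forall>e\<in>snd G. v e \<in> e"
    "\<forall>e\<in>snd G. \<forall>f\<in>snd G. card (e \<inter> f) = 3 \<longrightarrow> v f = adj_map e f (v e)"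
    by (rule consistent_pointer[OF common])
  have "\<forall>e\<in>snd G. \<exists>w\<in>e. points_to (colouring_of (snd G) v) e w"
    using points_to_colouring_of[OF v] v(1) by blast
  then have "C2_colouring G (colouring_of (snd G) v)"
    unfolding C2_colouring_def by (simp add: colouring_of_range)
  then show ?thesis
    by blast
qed

theorem theorem1p2:
  fixes G :: "'a set \<times> 'a set set"
  assumes "r_graph 4 G"
  shows "family_hom_free G (tight_cycle_family 4 2) \<longleftrightarrow>
    (\<exists>c :: 'a set \<Rightarrow> 'a option.
       (\<forall>T. T \<subseteq> fst G \<and> card T = 3 \<longrightarrow> c T = None \<or> (\<exists>v\<in>T. c T = Some v)) \<and>
       (\<forall>e\<in>snd G. \<exists>v\<in>e. (\<forall>T. T \<subseteq> e \<and> card T = 3 \<and> v \<in> T \<longrightarrow> c T = Some v) \<and>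
                          c (e - {v}) = None))"
proof -
  have "family_hom_free G (tight_cycle_family 4 2) \<longleftrightarrow> (\<exists>c. C2_colouring G c)"
    using hom_free_imp_C2_colouring[OF assms] C2_colouring_imp_hom_free[OF assms] by blast
  then show ?thesis
    unfolding C2_colouring_def points_to_def .
qed

end
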